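(* Let $R$ be a Reinhardt domain in $\Delta^r$ and $f$ a smooth $T$-invariant function on $R$. Then $f$ is strictly plurisubharmonic if and only if $\tilde f$ belongs to $LogConv^{\infty,+}(\mathcal D)^{(\mathbb Z_2)^r}$.
   Context: $\Delta^r$ is the unit polydisc in $\mathbb C^r$ and $T=(S^1)^r$ acts on it by coordinatewise rotations. A Reinhardt domain $R\subset\Delta^r$ is a $T$-invariant open subset (not necessarily connected). Set $\mathcal D=\{(a_1,\dots,a_r)\in\mathbb R^r:(\tanh a_1,\dots,\tanh a_r)\in R\}$ and, for $T$-invariant $f$ on $R$, $\tilde f(a_1,\dots,a_r)=f(\tanh a_1,\dots,\tanh a_r)$ (which is even in each variable). $LogConv^{\infty,+}(\mathcal D)^{(\mathbb Z_2)^r}$ is the class of smooth functions $\tilde f$ on $\mathcal D$, even in each variable, such that at every point $H=(a_1,\dots,a_r)\in\mathcal D$ the symmetric matrix with entries $2\coth(2a_j)\frac{\partial\tilde f}{\partial a_j}(H)\delta_{jl}+\frac{\partial^2\tilde f}{\partial a_j\partial a_l}(H)$ is strictly positive definite (where for $a_j=0$ the term $2\coth(2a_j)\frac{\partial\tilde f}{\partial a_j}$ is understood as its continuous extension $\frac{\partial^2\tilde f}{\partial a_j^2}$). *)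

theory Defs
  imports "HOL-Analysis.Analysis"
begin

definition dderiv :: "('a::real_normed_vector \<Rightarrow> 'b::real_normed_vector) \<Rightarrow> 'a \<Rightarrow> 'a \<Rightarrow> 'b" where
  "dderiv f v = (\<lambda>x. frechet_derivative f (at x) v)"

fun iter_dderiv :: "('a::real_normed_vector \<Rightarrow> 'b::real_normed_vector) \<Rightarrow> 'a list \<Rightarrow> 'a \<Rightarrow> 'b" where
  "iter_dderiv f [] = f"
| "iter_dderiv f (v # vs) = dderiv (iter_dderiv f vs) v"

definition smooth_on :: "'a::real_normed_vector set \<Rightarrow> ('a \<Rightarrow> 'b::real_normed_vector) \<Rightarrow> bool" where
  "smooth_on S f \<longleftrightarrow> open S \<and> (\<forall>vs. \<forall>x\<in>S. iter_dderiv f vs differentiable (at x))"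

definition wirt_z :: "'r::finite \<Rightarrow> (complex^'r \<Rightarrow> complex) \<Rightarrow> complex^'r \<Rightarrow> complex" where
  "wirt_z j g = (\<lambda>z. (dderiv g (axis j 1) z - \<i> * dderiv g (axis j \<i>) z) / 2)"

definition wirt_zbar :: "'r::finite \<Rightarrow> (complex^'r \<Rightarrow> complex) \<Rightarrow> complex^'r \<Rightarrow> complex" where
  "wirt_zbar j g = (\<lambda>z. (dderiv g (axis j 1) z + \<i> * dderiv g (axis j \<i>) z) / 2)"

definition levi :: "(complex^'r::finite \<Rightarrow> real) \<Rightarrow> 'r \<Rightarrow> 'r \<Rightarrow> complex^'r \<Rightarrow> complex" where
  "levi f j l = wirt_z j (wirt_zbar l (\<lambda>z. complex_of_real (f z)))"

definition strictly_psh_on :: "(complex^'r::finite) set \<Rightarrow> (complex^'r \<Rightarrow> real) \<Rightarrow> bool" where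
  "strictly_psh_on U f \<longleftrightarrow>
     (\<forall>z\<in>U. \<forall>w::complex^'r. w \<noteq> 0 \<longrightarrow>
        Re (\<Sum>j\<in>UNIV. \<Sum>l\<in>UNIV. levi f j l z * w$j * cnj (w$l)) > 0)"

definition unit_polydisc :: "(complex^'r::finite) set" where
  "unit_polydisc = {z. \<forall>j. norm (z$j) < 1}"

definition torus_act :: "('r::finite \<Rightarrow> real) \<Rightarrow> complex^'r \<Rightarrow> complex^'r" where
  "torus_act \<theta> z = (\<chi> j. cis (\<theta> j) * z$j)"

definition T_invariant_set :: "(complex^'r::finite) set \<Rightarrow> bool" where
  "T_invariant_set R \<longleftrightarrow> (\<forall>\<theta> z. z \<in> R \<longrightarrow> torus_act \<theta> z \<in> R)"

definition T_invariant_fun :: "(complex^'r::finite) set \<Rightarrow> (complex^'r \<Rightarrow> 'b) \<Rightarrow> bool" where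
  "T_invariant_fun R f \<longleftrightarrow> (\<forall>\<theta> z. z \<in> R \<longrightarrow> f (torus_act \<theta> z) = f z)"

definition reinhardt_domain :: "(complex^'r::finite) set \<Rightarrow> bool" where
  "reinhardt_domain R \<longleftrightarrow> open R \<and> R \<subseteq> unit_polydisc \<and> T_invariant_set R"

definition tanh_map :: "real^'r::finite \<Rightarrow> complex^'r" where
  "tanh_map a = (\<chi> j. complex_of_real (tanh (a$j)))"

definition tanh_domain :: "(complex^'r::finite) set \<Rightarrow> (real^'r) set" where
  "tanh_domain R = {a. tanh_map a \<in> R}"

definition tilde :: "(complex^'r::finite \<Rightarrow> real) \<Rightarrow> real^'r \<Rightarrow> real" where
  "tilde f = (\<lambda>a. f (tanh_map a))"

definition coth :: "real \<Rightarrow> real" where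
  "coth x = cosh x / sinh x"

definition reflect :: "'r::finite \<Rightarrow> real^'r \<Rightarrow> real^'r" where
  "reflect j a = (\<chi> k. if k = j then - (a$k) else a$k)"

definition pd :: "'r::finite \<Rightarrow> (real^'r \<Rightarrow> real) \<Rightarrow> real^'r \<Rightarrow> real" where
  "pd j g = dderiv g (axis j 1)"

text \<open>The diagonal term 2 coth(2a_j) dg/da_j, replaced at a_j = 0 by its continuous
  extension d^2 g/da_j^2.\<close>
definition diag_term :: "(real^'r::finite \<Rightarrow> real) \<Rightarrow> 'r \<Rightarrow> real^'r \<Rightarrow> real" where
  "diag_term g j H = (if H$j = 0 then pd j (pd j g) H else 2 * coth (2 * H$j) * pd j g H)"

definition logconv_matrix :: "(real^'r::finite \<Rightarrow> real) \<Rightarrow> real^'r \<Rightarrow> 'r \<Rightarrow> 'r \<Rightarrow> real" where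
  "logconv_matrix g H j l = (if j = l then diag_term g j H else 0) + pd j (pd l g) H"

definition LogConv_inf_plus_Z2 :: "(real^'r::finite) set \<Rightarrow> (real^'r \<Rightarrow> real) \<Rightarrow> bool" where
  "LogConv_inf_plus_Z2 D g \<longleftrightarrow>
     smooth_on D g
     \<and> (\<forall>a\<in>D. \<forall>j. reflect j a \<in> D \<and> g (reflect j a) = g a)
     \<and> (\<forall>H\<in>D. \<forall>v::real^'r. v \<noteq> 0 \<longrightarrow>
          (\<Sum>j\<in>UNIV. \<Sum>l\<in>UNIV. logconv_matrix g H j l * v$j * v$l) > 0)"

end

theory Submission
  imports Defs
begin

text \<open>Write \<open>z\<^sub>j = x\<^sub>j + \<i> y\<^sub>j\<close> and let \<open>H\<close> be the real Hessian of \<open>f\<close>. The Levi form at \<open>z\<close> in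
  direction \<open>w\<close> is \<open>(H(w,w) + H(\<i>w,\<i>w))/4\<close>, hence invariant under the torus, so strict
  plurisubharmonicity need only be tested at the real points \<open>x = tanh a\<close>, \<open>a \<in> \<D>\<close>, which every
  orbit meets. At such a point, differentiating \<open>\<partial>f/\<partial>\<theta>\<^sub>j = 0\<close> and using the half-turn symmetries
  kills all mixed entries, and the Levi form becomes \<open>(L(Re w) + L(Im w))/4\<close> for the real quadratic
  form with matrix \<open>L\<^sub>j\<^sub>l = \<partial>\<^sup>2f/\<partial>x\<^sub>j\<partial>x\<^sub>l + \<partial>\<^sup>2f/\<partial>y\<^sub>j\<partial>y\<^sub>l\<close>. Finally the chain rule for
  \<open>x = tanh a\<close>, together with \<open>x\<^sub>j \<partial>\<^sup>2f/\<partial>y\<^sub>j\<^sup>2 = \<partial>f/\<partial>x\<^sub>j\<close>, shows that the matrix in the definition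
  of \<open>LogConv\<close> is \<open>sech\<^sup>2 a\<^sub>j sech\<^sup>2 a\<^sub>l L\<^sub>j\<^sub>l\<close>, so both positivity conditions agree.\<close>

lemma axis_component: "axis i x $ j = (if j = i then x else 0)"
  by (simp add: axis_def)

lemma sum_scaleR_axis_component:
  "(\<Sum>i\<in>UNIV. c i *\<^sub>R (axis i x :: 'a::real_vector^'n::finite)) $ j = c j *\<^sub>R x"
  by (simp add: sum_component axis_component if_distrib sum.delta' cong: if_cong)

lemma axis_uminus: "axis j (- c) = - (axis j c :: 'a::ab_group_add^'n::finite)"
  by (simp add: axis_def vec_eq_iff)

lemma complex_vec_decompose:
  "w = (\<Sum>k\<in>UNIV. Re (w$k) *\<^sub>R axis k 1 + Im (w$k) *\<^sub>R (axis k \<i> :: complex^'r::finite))"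
  unfolding vec_eq_iff
  by (simp only: sum.distrib vector_add_component sum_scaleR_axis_component) (simp add: complex_eq_iff)

lemma dderiv_eq_if_has_derivative:
  "(k has_derivative D) (at x) \<Longrightarrow> dderiv k v x = D v"
  unfolding dderiv_def by (metis frechet_derivative_at)

lemma has_derivative_dderiv:
  "k differentiable (at x) \<Longrightarrow> (k has_derivative (\<lambda>v. dderiv k v x)) (at x)"
  unfolding dderiv_def by (simp add: frechet_derivative_works[symmetric] eta_contract_eq)

lemma dderiv_cong_open:
  assumes "open S" "x \<in> S" "\<And>y. y \<in> S \<Longrightarrow> k y = k' y"
  shows "dderiv k v x = dderiv k' v x"
proof -
  have "(k has_derivative D) (at x) \<longleftrightarrow> (k' has_derivative D) (at x)" for D
    using has_derivative_transform_within_open[OF _ assms(1,2), of k _ UNIV k']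
      has_derivative_transform_within_open[OF _ assms(1,2), of k' _ UNIV k] assms(3) by auto
  then show ?thesis unfolding dderiv_def frechet_derivative_def by simp
qed

lemma differentiable_cong_open:
  assumes "open S" "x \<in> S" "\<And>y. y \<in> S \<Longrightarrow> k y = k' y"
  shows "k differentiable (at x) \<longleftrightarrow> k' differentiable (at x)"
  unfolding differentiable_def
  using has_derivative_transform_within_open[OF _ assms(1,2), of k _ UNIV k']
    has_derivative_transform_within_open[OF _ assms(1,2), of k' _ UNIV k] assms(3) by auto

lemma iter_dderiv_cong_open:
  assumes "open S" "\<And>y. y \<in> S \<Longrightarrow> k y = k' y" "x \<in> S"
  shows "iter_dderiv k vs x = iter_dderiv k' vs x"
  using assms(3)
proof (induction vs arbitrary: x)
  case Nil
  then show ?case using assms(2) by simp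
next
  case (Cons v vs)
  then show ?case
    using dderiv_cong_open[OF assms(1), of x "iter_dderiv k vs" "iter_dderiv k' vs"] by simp
qed

lemma iter_dderiv_snoc: "iter_dderiv k (vs @ [v]) = iter_dderiv (dderiv k v) vs"
  by (induction vs) auto

lemma dderiv_const [simp]: "dderiv (\<lambda>x. c) v = (\<lambda>x. 0)"
  unfolding dderiv_def by simp

lemma dderiv_add:
  assumes "p differentiable (at y)" "q differentiable (at y)"
  shows "dderiv (\<lambda>x. p x + q x) v y = dderiv p v y + dderiv q v y"
  by (rule dderiv_eq_if_has_derivative
      [OF has_derivative_add[OF has_derivative_dderiv[OF assms(1)] has_derivative_dderiv[OF assms(2)]]])

lemma dderiv_mult:
  fixes p q :: "'a::real_normed_vector \<Rightarrow> 'b::real_normed_algebra"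
  assumes "p differentiable (at y)" "q differentiable (at y)"
  shows "dderiv (\<lambda>x. p x * q x) v y = p y * dderiv q v y + dderiv p v y * q y"
  by (rule dderiv_eq_if_has_derivative
      [OF has_derivative_mult[OF has_derivative_dderiv[OF assms(1)] has_derivative_dderiv[OF assms(2)]]])

lemma dderiv_of_real:
  fixes k :: "'a::real_normed_vector \<Rightarrow> real"
  assumes "k differentiable (at y)"
  shows "dderiv (\<lambda>x. complex_of_real (k x)) v y = of_real (dderiv k v y)"
  by (rule dderiv_eq_if_has_derivative[OF has_derivative_of_real[OF has_derivative_dderiv[OF assms]]])

lemma dderiv_linear:
  assumes "bounded_linear L"
  shows "dderiv L v = (\<lambda>x. L v)"
  using dderiv_eq_if_has_derivative[OF bounded_linear_imp_has_derivative[OF assms]] by auto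

lemma dderiv_linear_comp:
  assumes "bounded_linear L" "k differentiable (at (L x))"
  shows "dderiv (\<lambda>y. k (L y)) v x = dderiv k (L v) (L x)"
  by (rule dderiv_eq_if_has_derivative)
    (rule has_derivative_compose[OF bounded_linear_imp_has_derivative[OF assms(1)]
        has_derivative_dderiv[OF assms(2)], unfolded o_def])

lemma dderiv_scaleR_direction:
  assumes "k differentiable (at y)"
  shows "dderiv k (r *\<^sub>R v) y = r *\<^sub>R dderiv k v y"
  unfolding dderiv_def using linear_frechet_derivative[OF assms] by (simp add: linear_scale)

lemma dderiv_add_direction:
  assumes "k differentiable (at y)"
  shows "dderiv k (v + w) y = dderiv k v y + dderiv k w y"
  unfolding dderiv_def using linear_frechet_derivative[OF assms] by (simp add: linear_add)

lemma dderiv_sum_direction: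
  assumes "k differentiable (at y)"
  shows "dderiv k (\<Sum>i\<in>I. v i) y = (\<Sum>i\<in>I. dderiv k (v i) y)"
  unfolding dderiv_def using linear_frechet_derivative[OF assms] by (simp add: linear_sum)

section \<open>Functions with differentiable derivatives up to a given order\<close>

definition differentiable_upto ::
    "nat \<Rightarrow> 'a::real_normed_vector set \<Rightarrow> ('a \<Rightarrow> 'b::real_normed_vector) \<Rightarrow> bool" where
  "differentiable_upto n S k \<longleftrightarrow>
     (\<forall>vs. length vs \<le> n \<longrightarrow> (\<forall>x\<in>S. iter_dderiv k vs differentiable (at x)))"

lemma smooth_on_iff_differentiable_upto: "smooth_on S k \<longleftrightarrow> open S \<and> (\<forall>n. differentiable_upto n S k)"
  unfolding smooth_on_def differentiable_upto_def by blast

lemma differentiable_upto_0: "differentiable_upto 0 S k \<longleftrightarrow> (\<forall>x\<in>S. k differentiable (at x))"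
  unfolding differentiable_upto_def by auto

lemma differentiable_upto_Suc:
  "differentiable_upto (Suc n) S k \<longleftrightarrow>
     (\<forall>x\<in>S. k differentiable (at x)) \<and> (\<forall>v. differentiable_upto n S (dderiv k v))"
proof
  assume *: "differentiable_upto (Suc n) S k"
  have "\<forall>x\<in>S. k differentiable (at x)"
    using *[unfolded differentiable_upto_def, rule_format, of "[]"] by simp
  moreover have "differentiable_upto n S (dderiv k v)" for v
    unfolding differentiable_upto_def
    using *[unfolded differentiable_upto_def, rule_format, of "_ @ [v]"] by (simp add: iter_dderiv_snoc)
  ultimately show "(\<forall>x\<in>S. k differentiable (at x)) \<and> (\<forall>v. differentiable_upto n S (dderiv k v))"
    by blast
next
  assume *: "(\<forall>x\<in>S. k differentiable (at x)) \<and> (\<forall>v. differentiable_upto n S (dderiv k v))"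
  show "differentiable_upto (Suc n) S k"
    unfolding differentiable_upto_def
  proof (intro allI impI)
    fix vs :: "'a list"
    assume "length vs \<le> Suc n"
    with * show "\<forall>x\<in>S. iter_dderiv k vs differentiable (at x)"
      by (cases vs rule: rev_cases) (auto simp: iter_dderiv_snoc differentiable_upto_def)
  qed
qed

lemma differentiable_upto_Suc_imp: "differentiable_upto (Suc n) S k \<Longrightarrow> differentiable_upto n S k"
  unfolding differentiable_upto_def by auto

lemma differentiable_upto_cong_open:
  assumes "open S" "\<And>y. y \<in> S \<Longrightarrow> k y = k' y" "differentiable_upto n S k"
  shows "differentiable_upto n S k'"
  unfolding differentiable_upto_def
proof (intro allI impI ballI)
  fix vs :: "'a list" and x
  assume "length vs \<le> n" "x \<in> S"
  with assms(3) have "iter_dderiv k vs differentiable (at x)"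
    unfolding differentiable_upto_def by blast
  then show "iter_dderiv k' vs differentiable (at x)"
    using differentiable_cong_open[OF assms(1) \<open>x \<in> S\<close>, of "iter_dderiv k vs" "iter_dderiv k' vs"]
      iter_dderiv_cong_open[of S k k', OF assms(1,2)] by blast
qed

lemma differentiable_upto_const: "differentiable_upto n S (\<lambda>x. c)"
  by (induction n arbitrary: c) (simp_all add: differentiable_upto_0 differentiable_upto_Suc)

lemma differentiable_upto_linear:
  "bounded_linear L \<Longrightarrow> differentiable_upto n S L"
  by (cases n) (auto simp: differentiable_upto_0 differentiable_upto_Suc dderiv_linear
      differentiable_upto_const intro: bounded_linear_imp_differentiable)

lemma differentiable_upto_add:
  assumes "open S" "differentiable_upto n S p" "differentiable_upto n S q"
  shows "differentiable_upto n S (\<lambda>x. p x + q x)"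
  using assms(2,3)
proof (induction n arbitrary: p q)
  case 0
  then show ?case by (auto simp: differentiable_upto_0)
next
  case (Suc n)
  then have p: "\<forall>x\<in>S. p differentiable (at x)" and q: "\<forall>x\<in>S. q differentiable (at x)"
    and IH: "differentiable_upto n S (\<lambda>y. dderiv p v y + dderiv q v y)" for v
    by (auto simp: differentiable_upto_Suc)
  have "differentiable_upto n S (dderiv (\<lambda>x. p x + q x) v)" for v
    by (rule differentiable_upto_cong_open[OF assms(1) _ IH]) (use p q in \<open>simp add: dderiv_add\<close>)
  with p q show ?case by (simp add: differentiable_upto_Suc)
qed

lemma differentiable_upto_mult:
  fixes p q :: "'a::real_normed_vector \<Rightarrow> 'b::real_normed_algebra"
  assumes "open S" "differentiable_upto n S p" "differentiable_upto n S q"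
  shows "differentiable_upto n S (\<lambda>x. p x * q x)"
  using assms(2,3)
proof (induction n arbitrary: p q)
  case 0
  then show ?case by (auto simp: differentiable_upto_0)
next
  case (Suc n)
  then have "differentiable_upto n S p" "differentiable_upto n S q"
    by (simp_all add: differentiable_upto_Suc_imp)
  moreover from Suc.prems have p: "\<forall>x\<in>S. p differentiable (at x)"
    and q: "\<forall>x\<in>S. q differentiable (at x)"
    and "differentiable_upto n S (dderiv p v)" "differentiable_upto n S (dderiv q v)" for v
    by (auto simp: differentiable_upto_Suc)
  ultimately have IH: "differentiable_upto n S (\<lambda>y. p y * dderiv q v y + dderiv p v y * q y)" for v
    by (intro differentiable_upto_add[OF assms(1)] Suc.IH)
  have "differentiable_upto n S (dderiv (\<lambda>x. p x * q x) v)" for v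
    by (rule differentiable_upto_cong_open[OF assms(1) _ IH]) (use p q in \<open>simp add: dderiv_mult\<close>)
  with p q show ?case by (simp add: differentiable_upto_Suc)
qed

lemma differentiable_upto_sum:
  assumes "open S" "finite I" "\<And>i. i \<in> I \<Longrightarrow> differentiable_upto n S (p i)"
  shows "differentiable_upto n S (\<lambda>x. \<Sum>i\<in>I. p i x)"
  using assms(2,3)
  by (induction I rule: finite_induct)
    (simp_all add: differentiable_upto_const differentiable_upto_add[OF assms(1)])

lemma smooth_on_dderiv: "smooth_on S k \<Longrightarrow> smooth_on S (dderiv k v)"
  unfolding smooth_on_iff_differentiable_upto by (metis differentiable_upto_Suc)

section \<open>The coordinates \<open>tanh_map\<close>\<close>

lemma sech_squared_pos: "0 < 1 - tanh (t::real) ^ 2"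
proof -
  have "\<bar>tanh t\<bar> < 1" using tanh_real_bounds[of t] by auto
  then show ?thesis by (simp add: abs_square_less_1)
qed

lemma has_real_derivative_tanh: "(tanh has_real_derivative 1 - tanh t ^ 2) (at (t::real))"
proof -
  have "cosh t \<noteq> 0" by (metis cosh_real_pos less_irrefl)
  then show ?thesis
    unfolding tanh_def by (auto intro!: derivative_eq_intros simp: power2_eq_square field_split_simps)
qed

lemma has_real_derivative_sech_squared:
  "((\<lambda>t. 1 - tanh t ^ 2) has_real_derivative - (2 * tanh t * (1 - tanh t ^ 2))) (at (t::real))"
  using DERIV_diff[OF DERIV_const DERIV_mult[OF has_real_derivative_tanh has_real_derivative_tanh]]
  by (simp add: power2_eq_square algebra_simps)

lemma tanh_artanh_real:
  fixes r :: real
  assumes "-1 < r" "r < 1"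
  shows "tanh (artanh r) = r"
proof -
  have "(1 + r) / (1 - r) > 0" using assms by simp
  then have e: "exp (- 2 * artanh r) = (1 - r) / (1 + r)"
    unfolding artanh_def using assms by (simp add: exp_minus exp_ln)
  show ?thesis unfolding tanh_real_altdef e using assms by (simp add: field_simps)
qed

lemma two_coth_double:
  fixes a :: real
  assumes "a \<noteq> 0"
  shows "2 * coth (2 * a) = (1 + tanh a ^ 2) / tanh a"
proof -
  have "cosh a \<noteq> 0" by (metis cosh_real_pos less_irrefl)
  with assms show ?thesis
    unfolding coth_def sinh_double cosh_double tanh_def by (simp add: field_simps power2_eq_square)
qed

lemma tanh_map_eq_sum: "tanh_map a = (\<Sum>j\<in>UNIV. tanh (a$j) *\<^sub>R (axis j 1 :: complex^'r::finite))"
  unfolding vec_eq_iff sum_scaleR_axis_component by (simp add: tanh_map_def scaleR_conv_of_real)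

lemma tanh_map_has_derivative:
  "(tanh_map has_derivative
     (\<lambda>v. \<Sum>j\<in>UNIV. ((1 - tanh (a$j)^2) * v$j) *\<^sub>R (axis j 1 :: complex^'r::finite))) (at a)"
proof -
  have "((\<lambda>a. \<Sum>j\<in>UNIV. tanh (a$j) *\<^sub>R (axis j 1 :: complex^'r)) has_derivative
      (\<lambda>v. \<Sum>j\<in>UNIV. (v$j * (1 - tanh (a$j)^2)) *\<^sub>R (axis j 1 :: complex^'r))) (at a)"
    by (intro has_derivative_sum has_derivative_scaleR_left
        DERIV_compose_FDERIV[OF has_real_derivative_tanh]
        bounded_linear_imp_has_derivative bounded_linear_vec_nth)
  then show ?thesis by (simp add: tanh_map_eq_sum[abs_def] mult.commute)
qed

lemma tanh_map_differentiable: "tanh_map differentiable (at a)"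
  using tanh_map_has_derivative unfolding differentiable_def by blast

lemma open_tanh_domain: "open R \<Longrightarrow> open (tanh_domain R)"
  unfolding tanh_domain_def
  by (metis continuous_open_vimage continuous_at_imp_continuous_on differentiable_imp_continuous_within
      tanh_map_differentiable vimage_def)

lemma dderiv_comp_tanh_map:
  fixes F :: "complex^'r::finite \<Rightarrow> real"
  assumes "F differentiable (at (tanh_map a))"
  shows "dderiv (\<lambda>a. F (tanh_map a)) v a
    = (\<Sum>j\<in>UNIV. v$j * (1 - tanh (a$j)^2) * dderiv F (axis j 1) (tanh_map a))"
proof -
  have "dderiv (\<lambda>a. F (tanh_map a)) v a
      = dderiv F (\<Sum>j\<in>UNIV. ((1 - tanh (a$j)^2) * v$j) *\<^sub>R (axis j 1 :: complex^'r)) (tanh_map a)"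
    by (rule dderiv_eq_if_has_derivative)
      (rule has_derivative_compose[OF tanh_map_has_derivative has_derivative_dderiv[OF assms],
          unfolded o_def])
  also have "\<dots> = (\<Sum>j\<in>UNIV. v$j * (1 - tanh (a$j)^2) * dderiv F (axis j 1) (tanh_map a))"
    by (simp add: dderiv_sum_direction[OF assms] dderiv_scaleR_direction[OF assms] mult.commute)
  finally show ?thesis .
qed

lemma dderiv_axis_comp_tanh_map:
  fixes F :: "complex^'r::finite \<Rightarrow> real"
  assumes "F differentiable (at (tanh_map a))"
  shows "dderiv (\<lambda>a. F (tanh_map a)) (axis l 1) a = (1 - tanh (a$l)^2) * dderiv F (axis l 1) (tanh_map a)"
proof -
  have "(\<Sum>j\<in>UNIV. axis l 1 $ j * (1 - tanh (a$j)^2) * dderiv F (axis j 1) (tanh_map a))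
      = (\<Sum>j\<in>UNIV. if j = l then (1 - tanh (a$l)^2) * dderiv F (axis l 1) (tanh_map a) else 0)"
    by (rule sum.cong) (auto simp: axis_component)
  then show ?thesis by (simp add: dderiv_comp_tanh_map[OF assms])
qed

lemma smooth_on_comp_tanh_map:
  fixes F :: "complex^'r::finite \<Rightarrow> real"
  assumes "smooth_on R F"
  shows "smooth_on (tanh_domain R) (\<lambda>a. F (tanh_map a))"
proof -
  have R: "open R" using assms by (simp add: smooth_on_def)
  have "differentiable_upto n (tanh_domain R) (\<lambda>a. F (tanh_map a))"
    if "smooth_on R F" for n and F :: "complex^'r \<Rightarrow> real"
    using that
  proof (induction n arbitrary: F)
    case 0
    then have "\<forall>x\<in>R. F differentiable (at x)"
      by (metis differentiable_upto_0 smooth_on_iff_differentiable_upto)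
    then show ?case
      using differentiable_chain_at[OF tanh_map_differentiable]
      by (auto simp: differentiable_upto_0 tanh_domain_def o_def)
  next
    case (Suc n)
    then have dF: "\<forall>x\<in>R. F differentiable (at x)"
      by (metis differentiable_upto_0 smooth_on_iff_differentiable_upto)
    have "differentiable_upto n (tanh_domain R) (dderiv (\<lambda>a. F (tanh_map a)) v)" for v
    proof -
      \<comment> \<open>the chain rule writes this derivative as \<open>G \<circ> tanh_map\<close>, using \<open>1 - tanh\<^sup>2 = 1 - (Re z)\<^sup>2\<close>\<close>
      define G where "G = (\<lambda>z. \<Sum>j\<in>UNIV. v$j * ((1 - Re (z$j) * Re (z$j)) * dderiv F (axis j 1) z))"
      have Re: "bounded_linear (\<lambda>z::complex^'r. Re (z$j))" for j
        using bounded_linear_compose[OF bounded_linear_Re bounded_linear_vec_nth[of j]] by simp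
      have "differentiable_upto m R (\<lambda>z. 1 - Re (z$j) * Re (z$j))" for m j
        using differentiable_upto_add[OF R differentiable_upto_const differentiable_upto_mult[OF R
              differentiable_upto_const differentiable_upto_mult[OF R
                differentiable_upto_linear[OF Re] differentiable_upto_linear[OF Re]]],
            of m 1 "-1" j j]
        by simp
      then have "differentiable_upto m R G" for m
        unfolding G_def
        by (intro differentiable_upto_sum[OF R] differentiable_upto_mult[OF R] differentiable_upto_const
            Suc.prems[THEN smooth_on_dderiv, unfolded smooth_on_iff_differentiable_upto, THEN conjunct2, rule_format])
          simp_all
      then have "differentiable_upto n (tanh_domain R) (\<lambda>a. G (tanh_map a))"
        using R by (intro Suc.IH) (simp add: smooth_on_iff_differentiable_upto)
      moreover have "G (tanh_map a) = dderiv (\<lambda>a. F (tanh_map a)) v a" if "a \<in> tanh_domain R" for a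
        using dderiv_comp_tanh_map[of F a v] dF that
        unfolding G_def tanh_domain_def
        by (auto simp: tanh_map_def power2_eq_square algebra_simps intro!: sum.cong)
      ultimately show ?thesis
        by (rule differentiable_upto_cong_open[OF open_tanh_domain[OF R], rotated])
    qed
    moreover have "\<forall>a\<in>tanh_domain R. (\<lambda>a. F (tanh_map a)) differentiable (at a)"
      using differentiable_chain_at[OF tanh_map_differentiable] dF by (auto simp: tanh_domain_def o_def)
    ultimately show ?case by (simp add: differentiable_upto_Suc)
  qed
  with assms R show ?thesis by (simp add: smooth_on_iff_differentiable_upto open_tanh_domain)
qed

section \<open>The torus action\<close>

lemma linear_torus_act: "linear (torus_act \<theta>)"
  by (rule linearI) (auto simp: torus_act_def vec_eq_iff algebra_simps scaleR_conv_of_real)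

lemma bounded_linear_torus_act: "bounded_linear (torus_act \<theta>)"
  using linear_torus_act linear_conv_bounded_linear by blast

lemma torus_act_axis: "torus_act \<theta> (axis j c) = axis j (cis (\<theta> j) * c)"
  by (auto simp: torus_act_def vec_eq_iff axis_def)

lemma torus_act_eq_0_iff [simp]: "torus_act \<theta> w = 0 \<longleftrightarrow> w = 0"
  by (simp add: torus_act_def vec_eq_iff)

lemma torus_act_mult_ii: "torus_act \<theta> (\<chi> k. \<i> * w$k) = (\<chi> k. \<i> * torus_act \<theta> w $ k)"
  by (simp add: torus_act_def vec_eq_iff algebra_simps)

lemma torus_act_fixes:
  "q$j = 0 \<Longrightarrow> torus_act (\<lambda>k. if k = j then t else 0) q = q"
  by (auto simp: torus_act_def vec_eq_iff)

lemma torus_act_single_eq: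
  "torus_act (\<lambda>k. if k = j then t else 0) z
     = z + (cos t - 1) *\<^sub>R axis j (z$j) + sin t *\<^sub>R axis j (\<i> * z$j)"
  by (auto simp: torus_act_def vec_eq_iff axis_def cis.ctr complex_eq_iff algebra_simps)

lemma torus_act_Arg: "torus_act (\<lambda>k. - Arg (z$k)) z = (\<chi> k. complex_of_real (cmod (z$k)))"
proof -
  have "cis (- Arg c) * c = complex_of_real (cmod c)" for c
    by (subst (2) rcis_cmod_Arg[symmetric]) (simp add: rcis_def cis_mult mult.left_commute)
  then show ?thesis by (simp add: torus_act_def)
qed

lemma tanh_map_reflect: "tanh_map (reflect j a) = torus_act (\<lambda>k. if k = j then pi else 0) (tanh_map a)"
  by (auto simp: vec_eq_iff reflect_def torus_act_def tanh_map_def)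

text \<open>\<open>\<i> z\<^sub>j e\<^sub>j\<close> is the velocity at \<open>t = 0\<close> of the rotation by \<open>t\<close> in the \<open>j\<close>-th coordinate.\<close>
lemma dderiv_circle_tangent_eq_0:
  fixes k :: "complex^'r::finite \<Rightarrow> 'b::real_normed_vector"
  assumes "k differentiable (at z)" "\<And>t. k (torus_act (\<lambda>m. if m = j then t else 0) z) = k z"
  shows "dderiv k (axis j (\<i> * z$j)) z = 0"
proof -
  let ?u = "axis j (\<i> * z$j)"
  let ?p = "\<lambda>t. z + (cos t - 1) *\<^sub>R axis j (z$j) + sin t *\<^sub>R ?u"
  have "(?p has_derivative (\<lambda>s. s *\<^sub>R ?u)) (at 0)"
    by (auto intro!: derivative_eq_intros)
  then have "((\<lambda>t. k (?p t)) has_derivative (\<lambda>s. dderiv k (s *\<^sub>R ?u) z)) (at 0)"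
    using has_derivative_compose[of ?p _ 0 UNIV k] has_derivative_dderiv[OF assms(1)]
    by (simp add: o_def)
  moreover have "(\<lambda>t. k (?p t)) = (\<lambda>t. k z)"
    using assms(2) by (simp add: torus_act_single_eq[symmetric])
  ultimately have "(\<lambda>s. dderiv k (s *\<^sub>R ?u) z) = (\<lambda>s. 0)"
    using has_derivative_unique has_derivative_const by metis
  then show ?thesis by (metis scaleR_one)
qed

definition quad_form :: "('i::finite \<Rightarrow> 'i \<Rightarrow> real) \<Rightarrow> ('i \<Rightarrow> real) \<Rightarrow> real" where
  "quad_form M v = (\<Sum>j\<in>UNIV. \<Sum>l\<in>UNIV. M j l * v j * v l)"

definition pos_def :: "('i::finite \<Rightarrow> 'i \<Rightarrow> real) \<Rightarrow> bool" where
  "pos_def M \<longleftrightarrow> (\<forall>v. v \<noteq> (\<lambda>_. 0) \<longrightarrow> 0 < quad_form M v)"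

lemma quad_form_0 [simp]: "quad_form M (\<lambda>_. 0) = 0"
  by (simp add: quad_form_def)

lemma quad_form_rescale: "quad_form (\<lambda>j l. s j * s l * M j l) v = quad_form M (\<lambda>j. s j * v j)"
  unfolding quad_form_def by (simp add: ac_simps)

lemma pos_def_rescale:
  assumes "\<And>j. s j \<noteq> 0"
  shows "pos_def (\<lambda>j l. s j * s l * M j l) \<longleftrightarrow> pos_def M"
  unfolding pos_def_def quad_form_rescale
proof safe
  fix v :: "'a \<Rightarrow> real"
  assume pos: "\<forall>v. v \<noteq> (\<lambda>_. 0) \<longrightarrow> 0 < quad_form M (\<lambda>j. s j * v j)" and "v \<noteq> (\<lambda>_. 0)"
  then have "(\<lambda>j. v j / s j) \<noteq> (\<lambda>_. 0)"
    using assms by (auto simp: fun_eq_iff)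
  with pos show "0 < quad_form M v"
    using assms by force
next
  fix v :: "'a \<Rightarrow> real"
  assume "\<forall>v. v \<noteq> (\<lambda>_. 0) \<longrightarrow> 0 < quad_form M v" and "v \<noteq> (\<lambda>_. 0)"
  moreover have "(\<lambda>j. s j * v j) \<noteq> (\<lambda>_. 0)"
    using \<open>v \<noteq> (\<lambda>_. 0)\<close> assms by (auto simp: fun_eq_iff)
  ultimately show "0 < quad_form M (\<lambda>j. s j * v j)" by blast
qed

lemma pos_def_imp_quad_form_nonneg: "pos_def M \<Longrightarrow> 0 \<le> quad_form M v"
  unfolding pos_def_def by (cases "v = (\<lambda>_. 0)") (auto intro: less_imp_le)

lemma pos_def_iff_vec:
  "pos_def M \<longleftrightarrow> (\<forall>v::real^'i::finite. v \<noteq> 0 \<longrightarrow> 0 < (\<Sum>j\<in>UNIV. \<Sum>l\<in>UNIV. M j l * v$j * v$l))"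
  unfolding pos_def_def quad_form_def
proof safe
  fix v :: "real^'i"
  assume "\<forall>v. v \<noteq> (\<lambda>_. 0) \<longrightarrow> 0 < (\<Sum>j\<in>UNIV. \<Sum>l\<in>UNIV. M j l * v j * v l)" and "v \<noteq> 0"
  moreover have "vec_nth v \<noteq> (\<lambda>_. 0)"
    using \<open>v \<noteq> 0\<close> by (auto simp: vec_eq_iff fun_eq_iff)
  ultimately show "0 < (\<Sum>j\<in>UNIV. \<Sum>l\<in>UNIV. M j l * v$j * v$l)" by blast
next
  fix v :: "'i \<Rightarrow> real"
  assume "\<forall>v::real^'i. v \<noteq> 0 \<longrightarrow> 0 < (\<Sum>j\<in>UNIV. \<Sum>l\<in>UNIV. M j l * v$j * v$l)" and "v \<noteq> (\<lambda>_. 0)"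
  moreover have "vec_lambda v \<noteq> 0"
    using \<open>v \<noteq> (\<lambda>_. 0)\<close> by (auto simp: vec_eq_iff fun_eq_iff)
  ultimately show "0 < (\<Sum>j\<in>UNIV. \<Sum>l\<in>UNIV. M j l * v j * v l)" by force
qed

definition levi_form :: "(complex^'r::finite \<Rightarrow> real) \<Rightarrow> complex^'r \<Rightarrow> complex^'r \<Rightarrow> real" where
  "levi_form f z w = Re (\<Sum>j\<in>UNIV. \<Sum>l\<in>UNIV. levi f j l z * w$j * cnj (w$l))"

lemma strictly_psh_on_iff_levi_form:
  "strictly_psh_on U f \<longleftrightarrow> (\<forall>z\<in>U. \<forall>w. w \<noteq> 0 \<longrightarrow> 0 < levi_form f z w)"
  unfolding strictly_psh_on_def levi_form_def by blast

section \<open>Second derivatives of a smooth \<open>T\<close>-invariant function\<close>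

locale smooth_T_invariant =
  fixes R :: "(complex^'r::finite) set" and f :: "complex^'r \<Rightarrow> real"
  assumes reinhardt: "reinhardt_domain R"
    and smooth: "smooth_on R f"
    and invariant: "T_invariant_fun R f"
begin

lemma open_R: "open R"
  using reinhardt by (simp add: reinhardt_domain_def)

lemma torus_act_in_R: "z \<in> R \<Longrightarrow> torus_act \<theta> z \<in> R"
  using reinhardt by (simp add: reinhardt_domain_def T_invariant_set_def)

lemma differentiable_f: "y \<in> R \<Longrightarrow> f differentiable (at y)"
  using smooth unfolding smooth_on_def by (metis iter_dderiv.simps(1))

lemma differentiable_dderiv_f: "y \<in> R \<Longrightarrow> dderiv f v differentiable (at y)"
  using smooth unfolding smooth_on_def by (metis iter_dderiv.simps)

definition hess :: "complex^'r \<Rightarrow> complex^'r \<Rightarrow> complex^'r \<Rightarrow> real" where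
  "hess z p q = dderiv (dderiv f q) p z"

lemma dderiv_f_torus_act: "z \<in> R \<Longrightarrow> dderiv f (torus_act \<theta> v) (torus_act \<theta> z) = dderiv f v z"
  using dderiv_linear_comp[OF bounded_linear_torus_act differentiable_f[OF torus_act_in_R]]
    dderiv_cong_open[OF open_R, of z "\<lambda>y. f (torus_act \<theta> y)" f] invariant
  by (simp add: T_invariant_fun_def)

lemma hess_torus_act:
  "z \<in> R \<Longrightarrow> hess (torus_act \<theta> z) (torus_act \<theta> p) (torus_act \<theta> q) = hess z p q"
  unfolding hess_def
  using dderiv_linear_comp[OF bounded_linear_torus_act differentiable_dderiv_f[OF torus_act_in_R]]
    dderiv_cong_open[OF open_R, of z "\<lambda>y. dderiv f (torus_act \<theta> q) (torus_act \<theta> y)" "dderiv f q"]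
    dderiv_f_torus_act
  by simp

lemma hess_scaleR_left: "z \<in> R \<Longrightarrow> hess z (r *\<^sub>R p) q = r * hess z p q"
  unfolding hess_def using dderiv_scaleR_direction[OF differentiable_dderiv_f] by simp

lemma hess_add_left: "z \<in> R \<Longrightarrow> hess z (p + p') q = hess z p q + hess z p' q"
  unfolding hess_def by (rule dderiv_add_direction[OF differentiable_dderiv_f])

lemma hess_sum_left: "z \<in> R \<Longrightarrow> hess z (\<Sum>i\<in>I. p i) q = (\<Sum>i\<in>I. hess z (p i) q)"
  unfolding hess_def by (rule dderiv_sum_direction[OF differentiable_dderiv_f])

lemma hess_scaleR_right: "z \<in> R \<Longrightarrow> hess z p (r *\<^sub>R q) = r * hess z p q"
proof -
  assume z: "z \<in> R"
  have "hess z p (r *\<^sub>R q) = dderiv (\<lambda>y. r * dderiv f q y) p z"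
    unfolding hess_def
    by (rule dderiv_cong_open[OF open_R z]) (simp add: dderiv_scaleR_direction[OF differentiable_f])
  also have "\<dots> = r * hess z p q"
    using dderiv_mult[OF differentiable_const differentiable_dderiv_f[OF z]] by (simp add: hess_def)
  finally show ?thesis .
qed

lemma hess_add_right: "z \<in> R \<Longrightarrow> hess z p (q + q') = hess z p q + hess z p q'"
proof -
  assume z: "z \<in> R"
  have "hess z p (q + q') = dderiv (\<lambda>y. dderiv f q y + dderiv f q' y) p z"
    unfolding hess_def
    by (rule dderiv_cong_open[OF open_R z]) (simp add: dderiv_add_direction[OF differentiable_f])
  also have "\<dots> = hess z p q + hess z p q'"
    unfolding hess_def by (rule dderiv_add[OF differentiable_dderiv_f[OF z] differentiable_dderiv_f[OF z]])
  finally show ?thesis .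
qed

lemma hess_sum_right: "finite I \<Longrightarrow> z \<in> R \<Longrightarrow> hess z p (\<Sum>i\<in>I. q i) = (\<Sum>i\<in>I. hess z p (q i))"
  by (induction I rule: finite_induct)
    (simp_all add: hess_add_right hess_scaleR_right[where r=0, simplified])

lemma dderiv_f_circle_tangent:
  assumes "z \<in> R"
  shows "dderiv f (axis j (\<i> * z$j)) z = 0"
  by (rule dderiv_circle_tangent_eq_0[OF differentiable_f[OF assms]])
    (use invariant assms in \<open>simp add: T_invariant_fun_def\<close>)

lemma hess_circle_tangent_left:
  assumes z: "z \<in> R" and "q$j = 0"
  shows "hess z (axis j (\<i> * z$j)) q = 0"
  unfolding hess_def
proof (rule dderiv_circle_tangent_eq_0[OF differentiable_dderiv_f[OF z]])
  fix t
  show "dderiv f q (torus_act (\<lambda>m. if m = j then t else 0) z) = dderiv f q z"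
    using dderiv_f_torus_act[OF z, of "\<lambda>m. if m = j then t else 0" q] torus_act_fixes[OF \<open>q$j = 0\<close>]
    by simp
qed

text \<open>The derivative, in direction \<open>u\<close>, of the identity
  \<open>Re y\<^sub>l \<partial>f/\<partial>y\<^sub>l - Im y\<^sub>l \<partial>f/\<partial>x\<^sub>l = 0\<close> on \<open>R\<close> (which is \<open>dderiv_f_circle_tangent\<close>).\<close>
lemma hess_circle_tangent_right:
  assumes x: "x \<in> R"
  shows "Re (u$l) * dderiv f (axis l \<i>) x + Re (x$l) * hess x u (axis l \<i>)
       - (Im (u$l) * dderiv f (axis l 1) x + Im (x$l) * hess x u (axis l 1)) = 0"
proof -
  define \<Phi> where "\<Phi> = (\<lambda>y. Re (y$l) * dderiv f (axis l \<i>) y - Im (y$l) * dderiv f (axis l 1) y)"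
  have axis_ii: "axis l (\<i> * c) = Re c *\<^sub>R axis l \<i> + (- Im c) *\<^sub>R (axis l 1 :: complex^'r)" for c
    by (auto simp: axis_def vec_eq_iff complex_eq_iff)
  have "\<Phi> y = 0" if "y \<in> R" for y
    using dderiv_f_circle_tangent[OF that, of l]
    unfolding axis_ii dderiv_add_direction[OF differentiable_f[OF that]]
      dderiv_scaleR_direction[OF differentiable_f[OF that]]
    by (simp add: \<Phi>_def)
  then have "dderiv \<Phi> u x = 0"
    using dderiv_cong_open[OF open_R x, of \<Phi> "\<lambda>y. 0"] by simp
  have Re: "bounded_linear (\<lambda>y::complex^'r. Re (y$l))"
    using bounded_linear_compose[OF bounded_linear_Re bounded_linear_vec_nth[of l]] by simp
  have Im: "bounded_linear (\<lambda>y::complex^'r. Im (y$l))"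
    using bounded_linear_compose[OF bounded_linear_Im bounded_linear_vec_nth[of l]] by simp
  have "(\<Phi> has_derivative (\<lambda>u. (Re (x$l) * hess x u (axis l \<i>) + Re (u$l) * dderiv f (axis l \<i>) x)
       - (Im (x$l) * hess x u (axis l 1) + Im (u$l) * dderiv f (axis l 1) x))) (at x)"
    unfolding \<Phi>_def hess_def
    by (intro has_derivative_diff has_derivative_mult bounded_linear_imp_has_derivative Re Im
        has_derivative_dderiv differentiable_dderiv_f x)
  with \<open>dderiv \<Phi> u x = 0\<close> show ?thesis
    using dderiv_eq_if_has_derivative by fastforce
qed

text \<open>Where \<open>a\<^sub>l = 0\<close>, the half-turn in the \<open>l\<close>-th coordinate fixes the point and \<open>u\<close> but
  negates \<open>\<i> e\<^sub>l\<close>; elsewhere the circle identity applies.\<close>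
lemma hess_imag_right_eq_0:
  assumes x: "tanh_map a \<in> R" and "u$l = 0"
  shows "hess (tanh_map a) u (axis l \<i>) = 0"
proof (cases "a$l = 0")
  case False
  have "tanh (a$l) * hess (tanh_map a) u (axis l \<i>) = 0"
    using hess_circle_tangent_right[OF x, of u l] \<open>u$l = 0\<close> by (simp add: tanh_map_def)
  with False show ?thesis by simp
next
  case True
  let ?\<theta> = "\<lambda>k. if k = l then pi else 0"
  have "hess (tanh_map a) u (axis l \<i>)
      = hess (torus_act ?\<theta> (tanh_map a)) (torus_act ?\<theta> u) (torus_act ?\<theta> (axis l \<i>))"
    by (rule hess_torus_act[OF x, symmetric])
  also have "\<dots> = hess (tanh_map a) u (- axis l \<i>)"
    using True \<open>u$l = 0\<close> by (simp add: torus_act_fixes torus_act_axis axis_uminus tanh_map_def)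
  also have "\<dots> = - hess (tanh_map a) u (axis l \<i>)"
    using hess_scaleR_right[OF x, of u "-1"] by simp
  finally show ?thesis by simp
qed

lemma hess_imag_left_eq_0:
  assumes x: "tanh_map a \<in> R" and "q$j = 0"
  shows "hess (tanh_map a) (axis j \<i>) q = 0"
proof (cases "a$j = 0")
  case False
  have "axis j (\<i> * tanh_map a $ j) = tanh (a$j) *\<^sub>R (axis j \<i> :: complex^'r)"
    by (auto simp: axis_def vec_eq_iff complex_eq_iff tanh_map_def)
  then have "tanh (a$j) * hess (tanh_map a) (axis j \<i>) q = 0"
    using hess_circle_tangent_left[OF x \<open>q$j = 0\<close>] hess_scaleR_left[OF x] by simp
  with False show ?thesis by simp
next
  case True
  let ?\<theta> = "\<lambda>k. if k = j then pi else 0"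
  have "hess (tanh_map a) (axis j \<i>) q
      = hess (torus_act ?\<theta> (tanh_map a)) (torus_act ?\<theta> (axis j \<i>)) (torus_act ?\<theta> q)"
    by (rule hess_torus_act[OF x, symmetric])
  also have "\<dots> = hess (tanh_map a) (- axis j \<i>) q"
    using True \<open>q$j = 0\<close> by (simp add: torus_act_fixes torus_act_axis axis_uminus tanh_map_def)
  also have "\<dots> = - hess (tanh_map a) (axis j \<i>) q"
    using hess_scaleR_left[OF x, of "-1"] by simp
  finally show ?thesis by simp
qed

lemma tanh_mult_hess_imag_diag:
  assumes x: "tanh_map a \<in> R"
  shows "tanh (a$l) * hess (tanh_map a) (axis l \<i>) (axis l \<i>) = dderiv f (axis l 1) (tanh_map a)"
  using hess_circle_tangent_right[OF x, of "axis l \<i>" l] by (simp add: tanh_map_def)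

lemma hess_imag_diag_eq_real_diag:
  assumes x: "tanh_map a \<in> R" and "a$l = 0"
  shows "hess (tanh_map a) (axis l \<i>) (axis l \<i>) = hess (tanh_map a) (axis l 1) (axis l 1)"
proof -
  let ?\<theta> = "\<lambda>k. if k = l then pi/2 else 0"
  have "hess (tanh_map a) (axis l \<i>) (axis l \<i>)
      = hess (torus_act ?\<theta> (tanh_map a)) (torus_act ?\<theta> (axis l \<i>)) (torus_act ?\<theta> (axis l \<i>))"
    by (rule hess_torus_act[OF x, symmetric])
  also have "\<dots> = hess (tanh_map a) (- axis l 1) (- axis l 1)"
    using \<open>a$l = 0\<close> by (simp add: torus_act_fixes torus_act_axis axis_uminus tanh_map_def)
  also have "\<dots> = hess (tanh_map a) (axis l 1) (axis l 1)"
    using hess_scaleR_left[OF x, of "-1"] hess_scaleR_right[OF x, of _ "-1"] by simp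
  finally show ?thesis .
qed

text \<open>Four times the real part of the Levi matrix, see \<open>levi_eq\<close>.\<close>
definition levi_real :: "complex^'r \<Rightarrow> 'r \<Rightarrow> 'r \<Rightarrow> real" where
  "levi_real z j l = hess z (axis j 1) (axis l 1) + hess z (axis j \<i>) (axis l \<i>)"

lemma levi_eq:
  assumes z: "z \<in> R"
  shows "levi f j l z = (of_real (levi_real z j l)
    + \<i> * of_real (hess z (axis j 1) (axis l \<i>) - hess z (axis j \<i>) (axis l 1))) / 4"
proof -
  let ?W = "\<lambda>y. (complex_of_real (dderiv f (axis l 1) y) + \<i> * complex_of_real (dderiv f (axis l \<i>) y)) / 2"
  have "wirt_zbar l (\<lambda>z. complex_of_real (f z)) y = ?W y" if "y \<in> R" for y
    unfolding wirt_zbar_def using dderiv_of_real[OF differentiable_f[OF that]] by simp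
  then have "dderiv (wirt_zbar l (\<lambda>z. complex_of_real (f z))) u z = dderiv ?W u z" for u
    by (intro dderiv_cong_open[OF open_R z]) simp
  also have "dderiv ?W u z = (of_real (hess z u (axis l 1)) + \<i> * of_real (hess z u (axis l \<i>))) / 2" for u
    unfolding hess_def
    by (rule dderiv_eq_if_has_derivative)
      (use has_derivative_dderiv[OF differentiable_dderiv_f[OF z]] in \<open>auto intro!: derivative_eq_intros\<close>)
  finally have dderiv_wirt_zbar: "dderiv (wirt_zbar l (\<lambda>z. complex_of_real (f z))) u z
      = (of_real (hess z u (axis l 1)) + \<i> * of_real (hess z u (axis l \<i>))) / 2" for u .
  show ?thesis
    unfolding levi_def wirt_z_def dderiv_wirt_zbar levi_real_def by (simp add: complex_eq_iff field_simps)
qed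

lemma levi_form_expand:
  assumes "z \<in> R"
  shows "levi_form f z w = (\<Sum>j\<in>UNIV. \<Sum>l\<in>UNIV.
      levi_real z j l * (Re (w$j) * Re (w$l) + Im (w$j) * Im (w$l))
    - (hess z (axis j 1) (axis l \<i>) - hess z (axis j \<i>) (axis l 1)) * (Im (w$j) * Re (w$l) - Re (w$j) * Im (w$l))) / 4"
  unfolding levi_form_def by (simp add: levi_eq[OF assms] Re_sum sum_divide_distrib algebra_simps)

lemma hess_expand:
  assumes z: "z \<in> R"
  shows "hess z w w = (\<Sum>j\<in>UNIV. \<Sum>l\<in>UNIV.
      Re (w$j) * Re (w$l) * hess z (axis j 1) (axis l 1) + Re (w$j) * Im (w$l) * hess z (axis j 1) (axis l \<i>)
    + Im (w$j) * Re (w$l) * hess z (axis j \<i>) (axis l 1) + Im (w$j) * Im (w$l) * hess z (axis j \<i>) (axis l \<i>))"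
proof -
  define W where "W = (\<Sum>k\<in>UNIV. Re (w$k) *\<^sub>R axis k 1 + Im (w$k) *\<^sub>R (axis k \<i> :: complex^'r))"
  have "hess z w w = hess z W W"
    using complex_vec_decompose[of w] by (simp add: W_def)
  also have "\<dots> = (\<Sum>j\<in>UNIV. \<Sum>l\<in>UNIV.
      Re (w$j) * Re (w$l) * hess z (axis j 1) (axis l 1) + Re (w$j) * Im (w$l) * hess z (axis j 1) (axis l \<i>)
    + Im (w$j) * Re (w$l) * hess z (axis j \<i>) (axis l 1) + Im (w$j) * Im (w$l) * hess z (axis j \<i>) (axis l \<i>))"
    unfolding W_def hess_sum_left[OF z] hess_add_left[OF z] hess_scaleR_left[OF z]
    by (rule sum.cong[OF refl])
      (simp add: hess_sum_right[OF _ z] hess_add_right[OF z] hess_scaleR_right[OF z]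
        sum_distrib_left sum.distrib[symmetric] algebra_simps)
  finally show ?thesis .
qed

lemma levi_form_eq_hess:
  assumes "z \<in> R"
  shows "levi_form f z w = (hess z w w + hess z (\<chi> k. \<i> * w$k) (\<chi> k. \<i> * w$k)) / 4"
  unfolding levi_form_expand[OF assms] hess_expand[OF assms] levi_real_def
  by (simp add: sum.distrib[symmetric] algebra_simps)

lemma levi_form_torus_act:
  "z \<in> R \<Longrightarrow> levi_form f (torus_act \<theta> z) (torus_act \<theta> w) = levi_form f z w"
  by (simp add: levi_form_eq_hess torus_act_in_R torus_act_mult_ii[symmetric] hess_torus_act)

lemma levi_form_tanh_map:
  assumes x: "tanh_map a \<in> R"
  shows "levi_form f (tanh_map a) w = (quad_form (levi_real (tanh_map a)) (\<lambda>k. Re (w$k))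
    + quad_form (levi_real (tanh_map a)) (\<lambda>k. Im (w$k))) / 4"
proof -
  have "(hess (tanh_map a) (axis j 1) (axis l \<i>) - hess (tanh_map a) (axis j \<i>) (axis l 1))
      * (Im (w$j) * Re (w$l) - Re (w$j) * Im (w$l)) = 0" for j l
    by (cases "j = l")
      (simp_all add: hess_imag_right_eq_0[OF x] hess_imag_left_eq_0[OF x] axis_component)
  then show ?thesis
    unfolding levi_form_expand[OF x] quad_form_def
    by (simp add: sum.distrib[symmetric] algebra_simps)
qed

lemma torus_orbit_meets_tanh_map:
  assumes z: "z \<in> R"
  obtains a where "a \<in> tanh_domain R" "tanh_map a = torus_act (\<lambda>k. - Arg (z$k)) z"
proof
  let ?a = "\<chi> k. artanh (cmod (z$k))"
  have "cmod (z$k) < 1" for k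
    using reinhardt z by (auto simp: reinhardt_domain_def unit_polydisc_def)
  then have "tanh (artanh (cmod (z$k))) = cmod (z$k)" for k
    by (intro tanh_artanh_real) (auto intro: less_le_trans[OF _ norm_ge_zero])
  then show eq: "tanh_map ?a = torus_act (\<lambda>k. - Arg (z$k)) z"
    by (simp add: tanh_map_def torus_act_Arg)
  show "?a \<in> tanh_domain R"
    using torus_act_in_R[OF z] eq by (simp add: tanh_domain_def)
qed

lemma pos_def_levi_real_if_strictly_psh_on:
  assumes psh: "strictly_psh_on R f" and a: "a \<in> tanh_domain R"
  shows "pos_def (levi_real (tanh_map a))"
  unfolding pos_def_def
proof (intro allI impI)
  fix y :: "'r \<Rightarrow> real"
  assume "y \<noteq> (\<lambda>_. 0)"
  with a have x: "tanh_map a \<in> R" and "(\<chi> k. complex_of_real (y k)) \<noteq> 0"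
    by (auto simp: tanh_domain_def vec_eq_iff fun_eq_iff)
  with psh have "0 < levi_form f (tanh_map a) (\<chi> k. complex_of_real (y k))"
    by (simp add: strictly_psh_on_iff_levi_form)
  also have "\<dots> = quad_form (levi_real (tanh_map a)) y / 4"
    by (simp add: levi_form_tanh_map[OF x])
  finally show "0 < quad_form (levi_real (tanh_map a)) y" by simp
qed

lemma levi_form_pos_if_pos_def_levi_real:
  assumes pos: "\<forall>a\<in>tanh_domain R. pos_def (levi_real (tanh_map a))"
    and z: "z \<in> R" and "w \<noteq> 0"
  shows "0 < levi_form f z w"
proof -
  define \<theta> where "\<theta> = (\<lambda>k. - Arg (z$k))"
  obtain a where a: "a \<in> tanh_domain R" and x: "tanh_map a = torus_act \<theta> z"
    using torus_orbit_meets_tanh_map[OF z] unfolding \<theta>_def by blast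
  from \<open>w \<noteq> 0\<close> have "torus_act \<theta> w \<noteq> 0" by simp
  then have "(\<lambda>k. Re (torus_act \<theta> w $ k)) \<noteq> (\<lambda>_. 0) \<or> (\<lambda>k. Im (torus_act \<theta> w $ k)) \<noteq> (\<lambda>_. 0)"
    by (auto simp: vec_eq_iff fun_eq_iff complex_eq_iff)
  then have "0 < quad_form (levi_real (tanh_map a)) (\<lambda>k. Re (torus_act \<theta> w $ k))
      + quad_form (levi_real (tanh_map a)) (\<lambda>k. Im (torus_act \<theta> w $ k))"
    using pos a pos_def_imp_quad_form_nonneg unfolding pos_def_def
    by (metis add_pos_nonneg add_nonneg_pos)
  also have "\<dots> = 4 * levi_form f (tanh_map a) (torus_act \<theta> w)"
    using levi_form_tanh_map[of a "torus_act \<theta> w"] a by (simp add: tanh_domain_def)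
  also have "\<dots> = 4 * levi_form f z w"
    by (simp add: x levi_form_torus_act z)
  finally show ?thesis by simp
qed

lemma strictly_psh_on_iff_pos_def_levi_real:
  "strictly_psh_on R f \<longleftrightarrow> (\<forall>a\<in>tanh_domain R. pos_def (levi_real (tanh_map a)))"
  using pos_def_levi_real_if_strictly_psh_on levi_form_pos_if_pos_def_levi_real
  by (auto simp: strictly_psh_on_iff_levi_form)

lemma pd_tilde:
  assumes "a \<in> tanh_domain R"
  shows "pd l (tilde f) a = (1 - tanh (a$l)^2) * dderiv f (axis l 1) (tanh_map a)"
  unfolding pd_def tilde_def
  by (rule dderiv_axis_comp_tanh_map[OF differentiable_f]) (use assms in \<open>simp add: tanh_domain_def\<close>)

lemma pd_pd_tilde:
  assumes a: "a \<in> tanh_domain R"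
  shows "pd j (pd l (tilde f)) a
    = (if j = l then - (2 * tanh (a$l) * (1 - tanh (a$l)^2)) else 0) * dderiv f (axis l 1) (tanh_map a)
      + (1 - tanh (a$j)^2) * (1 - tanh (a$l)^2) * hess (tanh_map a) (axis j 1) (axis l 1)"
proof -
  let ?S = "\<lambda>b::real^'r. 1 - tanh (b$l)^2"
  let ?G = "\<lambda>b. dderiv f (axis l 1) (tanh_map b)"
  have x: "tanh_map a \<in> R" using a by (simp add: tanh_domain_def)
  have pd: "pd j (pd l (tilde f)) a = dderiv (\<lambda>b. ?S b * ?G b) (axis j 1) a"
    unfolding pd_def[of j]
    by (rule dderiv_cong_open[OF open_tanh_domain[OF open_R] a]) (simp add: pd_tilde)
  have "(?S has_derivative (\<lambda>v. v$l * - (2 * tanh (a$l) * (1 - tanh (a$l)^2)))) (at a)"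
    by (rule DERIV_compose_FDERIV[OF has_real_derivative_sech_squared
          bounded_linear_imp_has_derivative[OF bounded_linear_vec_nth]])
  then have dS: "?S differentiable (at a)"
    and eS: "dderiv ?S (axis j 1) a = (if j = l then - (2 * tanh (a$l) * (1 - tanh (a$l)^2)) else 0)"
    using dderiv_eq_if_has_derivative[of ?S _ a "axis j 1"]
    by (auto simp: differentiable_def axis_component)
  have dG: "?G differentiable (at a)"
    using differentiable_chain_at[OF tanh_map_differentiable differentiable_dderiv_f[OF x]]
    by (simp add: o_def)
  have eG: "dderiv ?G (axis j 1) a = (1 - tanh (a$j)^2) * hess (tanh_map a) (axis j 1) (axis l 1)"
    unfolding hess_def by (rule dderiv_axis_comp_tanh_map[OF differentiable_dderiv_f[OF x]])
  show ?thesis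
    unfolding pd dderiv_mult[OF dS dG] eS eG by (simp add: algebra_simps)
qed

lemma logconv_matrix_tilde:
  assumes a: "a \<in> tanh_domain R"
  shows "logconv_matrix (tilde f) a j l
    = (1 - tanh (a$j)^2) * (1 - tanh (a$l)^2) * levi_real (tanh_map a) j l"
proof -
  have x: "tanh_map a \<in> R" using a by (simp add: tanh_domain_def)
  consider "j \<noteq> l" | "j = l" "a$j = 0" | "j = l" "a$j \<noteq> 0" by blast
  then show ?thesis
  proof cases
    case 1
    then show ?thesis
      using pd_pd_tilde[OF a, of j l] hess_imag_right_eq_0[OF x, of "axis j \<i>" l]
      by (simp add: logconv_matrix_def levi_real_def axis_component algebra_simps)
  next
    case 2
    then show ?thesis
      using pd_pd_tilde[OF a, of j j] hess_imag_diag_eq_real_diag[OF x, of j]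
      by (simp add: logconv_matrix_def diag_term_def levi_real_def)
  next
    case 3
    let ?t = "tanh (a$j)"
    let ?hxx = "hess (tanh_map a) (axis j 1) (axis j 1)"
    let ?hyy = "hess (tanh_map a) (axis j \<i>) (axis j \<i>)"
    have "logconv_matrix (tilde f) a j j
        = 2 * coth (2 * a$j) * ((1 - ?t^2) * (?t * ?hyy))
          + (- (2 * ?t * (1 - ?t^2)) * (?t * ?hyy) + (1 - ?t^2) * (1 - ?t^2) * ?hxx)"
      using pd_pd_tilde[OF a, of j j] pd_tilde[OF a, of j] tanh_mult_hess_imag_diag[OF x, of j] 3
      by (simp add: logconv_matrix_def diag_term_def)
    also have "\<dots> = (1 - ?t^2) * (1 - ?t^2) * (?hxx + ?hyy)"
      unfolding two_coth_double[OF 3(2)] using 3 by (simp add: field_simps power2_eq_square)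
    finally show ?thesis
      using 3 by (simp add: levi_real_def)
  qed
qed

lemma pos_def_logconv_matrix_tilde_iff:
  assumes "a \<in> tanh_domain R"
  shows "pos_def (logconv_matrix (tilde f) a) \<longleftrightarrow> pos_def (levi_real (tanh_map a))"
proof -
  have "logconv_matrix (tilde f) a
      = (\<lambda>j l. (1 - tanh (a$j)^2) * (1 - tanh (a$l)^2) * levi_real (tanh_map a) j l)"
    using logconv_matrix_tilde[OF assms] by blast
  then show ?thesis
    using sech_squared_pos by (simp add: pos_def_rescale[of "\<lambda>j. 1 - tanh (a$j)^2"] less_imp_neq[symmetric])
qed

lemma smooth_on_tilde: "smooth_on (tanh_domain R) (tilde f)"
  unfolding tilde_def by (rule smooth_on_comp_tanh_map[OF smooth])

lemma tilde_reflect: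
  assumes "a \<in> tanh_domain R"
  shows "reflect j a \<in> tanh_domain R" "tilde f (reflect j a) = tilde f a"
  using assms torus_act_in_R invariant
  by (simp_all add: tanh_domain_def tilde_def tanh_map_reflect T_invariant_fun_def)

lemma LogConv_inf_plus_Z2_tilde_iff:
  "LogConv_inf_plus_Z2 (tanh_domain R) (tilde f) \<longleftrightarrow> (\<forall>a\<in>tanh_domain R. pos_def (levi_real (tanh_map a)))"
  unfolding LogConv_inf_plus_Z2_def pos_def_iff_vec[symmetric]
  by (simp add: smooth_on_tilde tilde_reflect pos_def_logconv_matrix_tilde_iff cong: ball_cong)

end

theorem proposition4p1:
  fixes R :: "(complex^'r::finite) set" and f :: "complex^'r \<Rightarrow> real"
  assumes "reinhardt_domain R"
    and "smooth_on R f"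
    and "T_invariant_fun R f"
  shows "strictly_psh_on R f \<longleftrightarrow> LogConv_inf_plus_Z2 (tanh_domain R) (tilde f)"
proof -
  interpret smooth_T_invariant R f
    using assms by unfold_locales
  show ?thesis
    by (simp only: strictly_psh_on_iff_pos_def_levi_real LogConv_inf_plus_Z2_tilde_iff)
qed

end
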